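(* If a policy in $\Pi$ satisfies $$\sum_{l=1}^m f_{l,\eta}\le\frac{\sum_{l=1}^m\mu_{\eta(l)}}{\sum_{l=1}^n\mu_{l}}\qquad\text{for all }m\in[n],\ \eta\in\mathcal S_n,$$ then it is throughput optimal, i.e. the Markov chain $\{\mathbf X(t)\}_{t\ge0}$ is positive recurrent for every arrival process (as in the model) with $n\lambda<\sum_{l=1}^n\mu_l$.
   Context: Model. Fix $n\ge1$, $[n]=\{1,\dots,n\}$, $\mathcal S_n$ the set of permutations of $[n]$, $e_1,\dots,e_n$ the standard basis of $\mathbb R^n$. Time is discrete, $t=0,1,2,\dots$. There are $n$ single-server FIFO queues with infinite buffers; $\mathbf Q(t)\in\mathbb Z_{\ge0}^n$ is the queue-length vector at the start of slot $t$. Arrivals $A(t)\in\mathbb Z_{\ge0}$ are i.i.d. over $t$ with $E[A(1)]=n\lambda$, $\mathrm{Var}(A(1))=n\sigma_\lambda^2$, $A(1)\le nA_{\max}$ a.s. Potential services $\mathbf S(t)\in\mathbb Z_{\ge0}^n$ are i.i.d. over $t$, independent of arrivals, with $E[S_l(1)]=\mu_l>0$, $\mathrm{Var}(S_l(1))=\sigma_l^2$, $S_l(1)\le S_{\max}$ a.s., and $\mu_1\le\dots\le\mu_n$. All $A(t)$ arrivals of slot $t$ go to one queue, encoded by $\mathbf Z(t)\in\{e_1,\dots,e_n\}$, and $\mathbf Q(t+1)=[\mathbf Q(t)+A(t)\mathbf Z(t)-\mathbf S(t)]^+=\mathbf Q(t)+A(t)\mathbf Z(t)-\mathbf S(t)+\mathbf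 U(t)$, where $\mathbf U(t)\ge0$ is the unused service ($0\le U_l(t)\le S_l(t)$, $Q_l(t+1)U_l(t)=0$). Policy class $\Pi$. A policy is given by an integer $T\ge1$, a vector $\boldsymbol\gamma\in(0,\infty)^n$, a sorting map $L$ and a decision map $Y$. Let $\{V_k\},\{W_k\}$ be i.i.d. Unif$[0,1]$ sequences, independent of each other and of arrivals and services. At each sampling time $kT$ the dispatcher forms a permutation $\eta_k=L\big((Q_l(kT)/\gamma_l)_{l=1}^n,V_k\big)\in\mathcal S_n$ satisfying $Q_{\eta_k(1)}(kT)/\gamma_{\eta_k(1)}\ge\dots\ge Q_{\eta_k(n)}(kT)/\gamma_{\eta_k(n)}$ ($\eta_k(l)$ is the index of the $l$-th longest scaled queue), then draws $\phi(k)=Y(\eta_k,\boldsymbol\mu,W_k)=(\phi_1(k),\dots,\phi_T(k))\in\{e_1,\dots,e_n\}^T$, and sets $\mathbf Z(kT+j)=\phi_{j+1}(k)$ for $j=0,\dots,T-1$. The process $\mathbf X(t)=(\mathbf Q(t),\phi(\lfloor t/T\rfloor),t-T\lfloor t/T\rfloor)$ is a discrete-time Markov chain. Dispatching statistics. For $\eta\in\mathcal S_n$, $l\in[n]$, let $N_\eta(l)=\sum_{j=1}^T(\phi_j)_{\eta(l)}$ where $\phi=Y(\eta,\boldsymbol\mu,W)$, $W\sim$ Unif$[0,1]$. Define $f_{l,\eta}=E[N_\eta(l)/T]$; thus $f_{l,\eta}\ge0$ and $\sum_l f_{l,\eta}=1$. *)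

theory Defs
  imports "HOL-Probability.Probability" "HOL-Combinatorics.Permutations"
begin

(* Queues are indexed 0..<n (paper: 1..n).  A state of the chain X(t) is
   (Q, phi, r): queue-length vector (entries at indices >= n are 0),
   the current dispatching list phi (entry j-1 of the list is the index of the
   queue receiving the arrivals of the j-th slot of the frame), and the phase
   r = t - T*floor(t/T). *)
type_synonym state = "(nat \<Rightarrow> nat) \<times> nat list \<times> nat"

definition queue_update ::
  "nat \<Rightarrow> (nat \<Rightarrow> nat) \<Rightarrow> nat \<Rightarrow> nat \<Rightarrow> (nat \<Rightarrow> nat) \<Rightarrow> (nat \<Rightarrow> nat)" where
  "queue_update n Q a j s = (\<lambda>i. if i < n then (Q i + (if i = j then a else 0)) - s i else 0)"

definition service_rate :: "(nat \<Rightarrow> nat) pmf \<Rightarrow> nat \<Rightarrow> real" where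
  "service_rate S l = measure_pmf.expectation S (\<lambda>s. real (s l))"

definition dispatch_frac ::
  "nat \<Rightarrow> ((nat \<Rightarrow> nat) \<Rightarrow> (nat \<Rightarrow> real) \<Rightarrow> nat list pmf) \<Rightarrow> (nat \<Rightarrow> real)
     \<Rightarrow> nat \<Rightarrow> (nat \<Rightarrow> nat) \<Rightarrow> real" where
  "dispatch_frac T Y \<mu> l \<eta> =
     measure_pmf.expectation (Y \<eta> \<mu>) (\<lambda>\<phi>. real (length (filter (\<lambda>j. j = \<eta> l) \<phi>)) / real T)"

(* Sorting map: randomized (the distribution of L(q, V) for V ~ Unif[0,1]);
   every outcome is a permutation of [n] sorting q in nonincreasing order. *)
definition valid_sorting :: "nat \<Rightarrow> ((nat \<Rightarrow> real) \<Rightarrow> (nat \<Rightarrow> nat) pmf) \<Rightarrow> bool" where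
  "valid_sorting n L \<longleftrightarrow>
     (\<forall>q \<eta>. \<eta> \<in> set_pmf (L q) \<longrightarrow>
        \<eta> permutes {..<n} \<and> (\<forall>i j. i \<le> j \<and> j < n \<longrightarrow> q (\<eta> j) \<le> q (\<eta> i)))"

(* Decision map: randomized (distribution of Y(eta, mu, W) for W ~ Unif[0,1]);
   outcomes are elements of {e_1..e_n}^T, encoded as lists of indices of length T. *)
definition valid_decision ::
  "nat \<Rightarrow> nat \<Rightarrow> ((nat \<Rightarrow> nat) \<Rightarrow> (nat \<Rightarrow> real) \<Rightarrow> nat list pmf) \<Rightarrow> (nat \<Rightarrow> real) \<Rightarrow> bool" where
  "valid_decision n T Y \<mu> \<longleftrightarrow>
     (\<forall>\<eta>. \<eta> permutes {..<n} \<longrightarrow>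
        (\<forall>\<phi> \<in> set_pmf (Y \<eta> \<mu>). length \<phi> = T \<and> (\<forall>j\<in>set \<phi>. j < n)))"

definition policy_kernel ::
  "nat \<Rightarrow> nat pmf \<Rightarrow> (nat \<Rightarrow> nat) pmf \<Rightarrow> nat \<Rightarrow> (nat \<Rightarrow> real)
     \<Rightarrow> ((nat \<Rightarrow> real) \<Rightarrow> (nat \<Rightarrow> nat) pmf)
     \<Rightarrow> ((nat \<Rightarrow> nat) \<Rightarrow> (nat \<Rightarrow> real) \<Rightarrow> nat list pmf)
     \<Rightarrow> state \<Rightarrow> state pmf" where
  "policy_kernel n A S T \<gamma> L Y = (\<lambda>(Q, \<phi>, r).
     bind_pmf A (\<lambda>a. bind_pmf S (\<lambda>s.
       let Q' = queue_update n Q a (\<phi> ! r) s in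
       if Suc r < T then return_pmf (Q', \<phi>, Suc r)
       else bind_pmf (L (\<lambda>i. real (Q' i) / \<gamma> i)) (\<lambda>\<eta>.
              bind_pmf (Y \<eta> (service_rate S)) (\<lambda>\<phi>'. return_pmf (Q', \<phi>', 0))))))"

definition state_space :: "nat \<Rightarrow> nat \<Rightarrow> state set" where
  "state_space n T = {(Q, \<phi>, r). (\<forall>i\<ge>n. Q i = 0) \<and> r < T \<and> length \<phi> = T \<and> (\<forall>j\<in>set \<phi>. j < n)}"

(* nonhit K C k x = P_x(X_1 \<notin> C, ..., X_k \<notin> C) for the chain with kernel K *)
fun nonhit :: "('s \<Rightarrow> 's pmf) \<Rightarrow> 's set \<Rightarrow> nat \<Rightarrow> 's \<Rightarrow> real" where
  "nonhit K C 0 x = 1"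
| "nonhit K C (Suc k) x =
     measure_pmf.expectation (K x) (\<lambda>y. if y \<in> C then 0 else nonhit K C k y)"

(* Positive recurrence (Foster sense): there is a finite set C of states whose
   hitting time tau_C = min{t >= 1 : X(t) \<in> C} has finite mean,
   E_x[tau_C] = sum_k P_x(tau_C > k) < \<infinity>, from every state x. *)
definition positive_recurrent :: "('s \<Rightarrow> 's pmf) \<Rightarrow> 's set \<Rightarrow> bool" where
  "positive_recurrent K Sp \<longleftrightarrow>
     (\<exists>C. finite C \<and> C \<subseteq> Sp \<and> (\<forall>x\<in>Sp. summable (\<lambda>k. nonhit K C k x)))"

end

theory Submission
  imports Defs
begin

text \<open>
  Write x_l = Q_l / \<gamma>_l and \<lambda> = E[A].  The Lyapunov function is V(Q) = \<Sum>_l Q_l^2 / \<gamma>_l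
  plus, for each slot still to come in the current frame, the first-order drift
  2 (\<lambda> x_i - \<Sum>_l \<mu>_l x_l) of dispatching that slot to its queue i, plus a constant credit per
  remaining slot; inside a frame its expected one-step change is at most -1 by construction.
  At a frame boundary the new dispatching list is drawn after sorting the scaled queues, and
  Abel summation against the nonincreasing weights x_\<eta>(i) turns the hypothesis on the partial
  sums of f_l,\<eta>, together with \<lambda> < \<Sum> \<mu>, into an expected frame drift of at most
  -2 T \<delta> max_l x_l, where \<delta> = (1 - \<lambda> / \<Sum> \<mu>) \<mu>_1.  This beats all constants as soon as some
  queue exceeds a threshold, so Foster's criterion applies with the finite set of states whose
  queues are all below it.
\<close>

lemma integrable_measure_pmf_bounded:
  fixes f :: "'a \<Rightarrow> real"
  assumes "\<And>x. x \<in> set_pmf M \<Longrightarrow> \<bar>f x\<bar> \<le> B"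
  shows "integrable (measure_pmf M) f"
  by (rule measure_pmf.integrable_const_bound[where B = B]) (auto intro!: AE_pmfI assms)

lemma abs_expectation_le:
  fixes f :: "'a \<Rightarrow> real"
  assumes "\<And>x. x \<in> set_pmf M \<Longrightarrow> \<bar>f x\<bar> \<le> B"
  shows "\<bar>measure_pmf.expectation M f\<bar> \<le> B"
proof -
  have "\<bar>measure_pmf.expectation M f\<bar> \<le> measure_pmf.expectation M (\<lambda>x. \<bar>f x\<bar>)"
    using integral_norm_bound[of "measure_pmf M" f] by simp
  also have "\<dots> \<le> measure_pmf.expectation M (\<lambda>x. B)"
    using assms
    by (intro integral_mono_AE AE_pmfI integrable_measure_pmf_bounded[where B = B]) force+
  finally show ?thesis by simp
qed

lemma expectation_le_const_finite:
  fixes f :: "'a \<Rightarrow> real"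
  assumes "finite (set_pmf M)" and "\<And>x. x \<in> set_pmf M \<Longrightarrow> f x \<le> c"
  shows "measure_pmf.expectation M f \<le> c"
proof -
  have "measure_pmf.expectation M f \<le> measure_pmf.expectation M (\<lambda>x. c)"
    using assms by (intro integral_mono_AE AE_pmfI integrable_measure_pmf_finite) auto
  then show ?thesis
    by simp
qed

lemma expectation_bind_pmf_finite:
  fixes f :: "'b \<Rightarrow> real"
  assumes fin: "finite (set_pmf (bind_pmf M N))"
  shows "measure_pmf.expectation (bind_pmf M N) f
       = measure_pmf.expectation M (\<lambda>x. measure_pmf.expectation (N x) f)"
proof -
  define F where "F = set_pmf (bind_pmf M N)"
  define g where "g z = (if z \<in> F then f z else 0)" for z
  define B where "B = (\<Sum>z\<in>F. \<bar>f z\<bar>)"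
  have g_bounded: "\<bar>g z\<bar> \<le> B" for z
    unfolding g_def B_def using fin F_def by (auto intro: member_le_sum)
  have "measure_pmf.expectation (bind_pmf M N) f = measure_pmf.expectation (bind_pmf M N) g"
    by (rule integral_cong_AE) (auto intro!: AE_pmfI simp: g_def F_def)
  also have "\<dots> = integral\<^sup>L (measure_pmf M \<bind> (\<lambda>x. measure_pmf (N x))) g"
    by (simp add: measure_pmf_bind)
  also have "\<dots> = \<integral>x. integral\<^sup>L (measure_pmf (N x)) g \<partial>measure_pmf M"
    by (rule integral_bind[where K = "count_space UNIV" and B = B and B' = 1])
       (auto simp: g_bounded measure_subprob measure_pmf.emeasure_space_1
          measure_pmf.finite_measure_axioms intro!: measurable_measure_pmf AE_pmfI)
  also have "\<dots> = measure_pmf.expectation M (\<lambda>x. measure_pmf.expectation (N x) f)"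
    by (rule integral_cong_AE) (auto intro!: AE_pmfI integral_cong_AE simp: g_def F_def)
  finally show ?thesis .
qed

lemma nonhit_nonneg: "0 \<le> nonhit K C k x"
  by (induction k arbitrary: x) (auto intro!: integral_nonneg)

text \<open>Foster's criterion: summing the identity
  \<open>\<Sum>j<k+1. nonhit j x = 1 + E\<^sub>x[\<Sum>j<k. nonhit j X\<^sub>1; X\<^sub>1 \<notin> C]\<close> along the drift
  inequality bounds every partial sum by \<open>W x + b\<close> off \<open>C\<close>.\<close>

theorem positive_recurrent_if_drift:
  fixes K :: "'s \<Rightarrow> 's pmf" and W :: "'s \<Rightarrow> real"
  assumes fin: "\<And>x. x \<in> Sp \<Longrightarrow> finite (set_pmf (K x))"
    and closed: "\<And>x. x \<in> Sp \<Longrightarrow> set_pmf (K x) \<subseteq> Sp"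
    and bounded_below: "\<And>x. x \<in> Sp \<Longrightarrow> W x \<ge> - b"
    and drift: "\<And>x. x \<in> Sp \<Longrightarrow> x \<notin> C \<Longrightarrow> measure_pmf.expectation (K x) W \<le> W x - 1"
    and "finite C" and "C \<subseteq> Sp"
  shows "positive_recurrent K Sp"
proof -
  define E where "E x = measure_pmf.expectation (K x) (\<lambda>y. W y + b)" for x
  have step: "(\<Sum>j<Suc k. nonhit K C j x) \<le> 1 + E x"
    if x: "x \<in> Sp" and IH: "\<forall>y\<in>Sp - C. (\<Sum>j<k. nonhit K C j y) \<le> W y + b" for k x
  proof -
    have "(\<Sum>j<Suc k. nonhit K C j x) = 1 + (\<Sum>j<k. nonhit K C (Suc j) x)"
      by (subst sum.lessThan_Suc_shift) simp
    also have "\<dots> = 1 + measure_pmf.expectation (K x)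
        (\<lambda>y. \<Sum>j<k. if y \<in> C then 0 else nonhit K C j y)"
      by (subst Bochner_Integration.integral_sum) (auto intro: integrable_measure_pmf_finite fin x)
    also have "(\<lambda>y. \<Sum>j<k. if y \<in> C then 0 else nonhit K C j y)
        = (\<lambda>y. if y \<in> C then 0 else (\<Sum>j<k. nonhit K C j y))"
      by auto
    also have "1 + measure_pmf.expectation (K x)
        (\<lambda>y. if y \<in> C then 0 else (\<Sum>j<k. nonhit K C j y)) \<le> 1 + E x"
      unfolding E_def using IH closed[OF x] bounded_below
      by (intro add_left_mono integral_mono_AE AE_pmfI integrable_measure_pmf_finite fin x)
         (force simp: add.commute)+
    finally show ?thesis .
  qed
  have partial_sums_bounded: "\<forall>y\<in>Sp - C. (\<Sum>j<k. nonhit K C j y) \<le> W y + b" for k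
  proof (induction k)
    case 0
    then show ?case using bounded_below by fastforce
  next
    case (Suc k)
    have "E x = measure_pmf.expectation (K x) W + b" if "x \<in> Sp" for x
      unfolding E_def using fin[OF that]
      by (simp add: integrable_measure_pmf_finite measure_pmf.prob_space)
    then show ?case using step[OF _ Suc] drift by fastforce
  qed
  have "summable (\<lambda>k. nonhit K C k x)" if "x \<in> Sp" for x
    using step[OF that partial_sums_bounded]
    by (intro bounded_imp_summable[where B = "1 + E x"] nonhit_nonneg)
       (simp add: lessThan_Suc_atMost[symmetric])
  then show ?thesis
    unfolding positive_recurrent_def using assms by blast
qed

lemma sum_mult_nonincreasing_le:
  fixes y c :: "nat \<Rightarrow> real"
  assumes "n \<ge> 1"
    and nonincreasing: "\<And>i j. i \<le> j \<Longrightarrow> j < n \<Longrightarrow> y j \<le> y i"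
    and nonneg: "\<And>i. i < n \<Longrightarrow> y i \<ge> 0"
    and partial_sums: "\<And>m. 1 \<le> m \<Longrightarrow> m \<le> n \<Longrightarrow> (\<Sum>i<m. c i) \<le> - \<delta>"
  shows "(\<Sum>i<n. y i * c i) \<le> - \<delta> * y 0"
proof -
  have invariant: "(\<Sum>i<Suc m. y i * c i) \<le> y m * ((\<Sum>i<Suc m. c i) + \<delta>) - \<delta> * y 0"
    if "Suc m \<le> n" for m
    using that
  proof (induction m)
    case 0
    then show ?case by (simp add: algebra_simps)
  next
    case (Suc m)
    have "(\<Sum>i<Suc m. c i) + \<delta> \<le> 0"
      using partial_sums[of "Suc m"] Suc.prems by simp
    moreover have "y (Suc m) \<le> y m"
      using nonincreasing Suc.prems by simp
    ultimately have "y m * ((\<Sum>i<Suc m. c i) + \<delta>) \<le> y (Suc m) * ((\<Sum>i<Suc m. c i) + \<delta>)"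
      by (simp add: mult_right_mono_neg)
    then show ?case
      using Suc by (simp add: algebra_simps)
  qed
  obtain m where m: "n = Suc m"
    using \<open>n \<ge> 1\<close> by (cases n) auto
  have "y m * ((\<Sum>i<n. c i) + \<delta>) \<le> 0"
    using nonneg[of m] partial_sums[of n] m by (intro mult_nonneg_nonpos) auto
  then show ?thesis
    using invariant[of m] m by simp
qed

lemma pos_part_square_le:
  fixes q w D :: real
  assumes "\<bar>w\<bar> \<le> D"
  shows "(max 0 (q + w))\<^sup>2 \<le> q\<^sup>2 + 2 * q * w + D\<^sup>2"
proof -
  have "(max 0 (q + w))\<^sup>2 \<le> (q + w)\<^sup>2"
    by (cases "q + w \<ge> 0") (auto simp: max_def)
  moreover have "w\<^sup>2 \<le> D\<^sup>2"
    using assms abs_le_square_iff[of w D] by simp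
  ultimately show ?thesis
    by (simp add: power2_sum)
qed

lemma sum_list_map_eq_sum_count_list:
  fixes g :: "'a \<Rightarrow> 'b :: semiring_1"
  assumes "finite X" and "set xs \<subseteq> X"
  shows "sum_list (map g xs) = (\<Sum>v\<in>X. of_nat (count_list xs v) * g v)"
  using assms(2)
proof (induction xs)
  case (Cons a xs)
  have "(\<Sum>v\<in>X. of_nat (count_list (a # xs) v) * g v)
      = (\<Sum>v\<in>X. of_nat (count_list xs v) * g v + (if v = a then g v else 0))"
    by (intro sum.cong) (auto simp: algebra_simps)
  also have "\<dots> = sum_list (map g xs) + g a"
    using Cons assms(1) by (simp add: sum.distrib)
  finally show ?case
    by (simp add: add.commute)
qed simp

lemma finite_bounded_states: "finite {z \<in> state_space n T. \<forall>l<n. fst z l \<le> M}"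
proof -
  let ?f = "\<lambda>(xs :: nat list, \<phi> :: nat list, r :: nat). ((\<lambda>i. if i < n then xs ! i else 0), \<phi>, r)"
  let ?X = "{xs. set xs \<subseteq> {..M} \<and> length xs = n} \<times> {\<phi>. set \<phi> \<subseteq> {..<n} \<and> length \<phi> = T} \<times> {..<T}"
  have "{z \<in> state_space n T. \<forall>l<n. fst z l \<le> M} \<subseteq> ?f ` ?X"
  proof
    fix z assume z: "z \<in> {z \<in> state_space n T. \<forall>l<n. fst z l \<le> M}"
    obtain Q \<phi> r where zz: "z = (Q, \<phi>, r)"
      by (cases z) auto
    have "Q = (\<lambda>i. if i < n then map Q [0..<n] ! i else 0)"
      using z zz by (auto simp: state_space_def)
    then show "z \<in> ?f ` ?X"
      using z zz by (intro image_eqI[where x = "(map Q [0..<n], \<phi>, r)"]) (auto simp: state_space_def)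
  qed
  moreover have "finite (?f ` ?X)"
    by (intro finite_imageI finite_cartesian_product finite_lists_length_eq) auto
  ultimately show ?thesis
    by (rule finite_subset)
qed

locale dispatching_system =
  fixes n T :: nat and A :: "nat pmf" and S :: "(nat \<Rightarrow> nat) pmf"
    and \<gamma> :: "nat \<Rightarrow> real"
    and L :: "(nat \<Rightarrow> real) \<Rightarrow> (nat \<Rightarrow> nat) pmf"
    and Y :: "(nat \<Rightarrow> nat) \<Rightarrow> (nat \<Rightarrow> real) \<Rightarrow> nat list pmf"
    and Amax Smax :: nat
  assumes n_pos: "n \<ge> 1"
    and A_bounded: "\<forall>a\<in>set_pmf A. a \<le> Amax"
    and S_bounded: "\<forall>s\<in>set_pmf S. \<forall>l<n. s l \<le> Smax"
    and mu_pos: "\<forall>l<n. service_rate S l > 0"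
    and mu_sorted: "\<forall>l m. l \<le> m \<and> m < n \<longrightarrow> service_rate S l \<le> service_rate S m"
    and T_pos: "T \<ge> 1"
    and gamma_pos: "\<forall>l<n. \<gamma> l > 0"
    and L_valid: "valid_sorting n L"
    and Y_valid: "valid_decision n T Y (service_rate S)"
    and cond: "\<forall>\<eta>. \<eta> permutes {..<n} \<longrightarrow> (\<forall>m\<in>{1..n}.
                 (\<Sum>l<m. dispatch_frac T Y (service_rate S) l \<eta>)
                   \<le> (\<Sum>l<m. service_rate S (\<eta> l)) / (\<Sum>l<n. service_rate S l))"
    and load: "measure_pmf.expectation A real < (\<Sum>l<n. service_rate S l)"
begin

abbreviation mu where "mu \<equiv> service_rate S"
abbreviation Sp where "Sp \<equiv> state_space n T"
abbreviation Kp where "Kp \<equiv> policy_kernel n A S T \<gamma> L Y"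

definition arrival_mean :: real where
  "arrival_mean = measure_pmf.expectation A real"

definition mu_total :: real where
  "mu_total = (\<Sum>l<n. mu l)"

definition margin :: real where
  "margin = (1 - arrival_mean / mu_total) * mu 0"

definition scaled :: "(nat \<Rightarrow> nat) \<Rightarrow> nat \<Rightarrow> real" where
  "scaled Q l = real (Q l) / \<gamma> l"

definition V :: "(nat \<Rightarrow> nat) \<Rightarrow> real" where
  "V Q = (\<Sum>l<n. (real (Q l))\<^sup>2 / \<gamma> l)"

text \<open>The first-order part of the expected change of \<open>V\<close> in a slot whose arrivals go to queue \<open>i\<close>.\<close>

definition drift_term :: "(nat \<Rightarrow> nat) \<Rightarrow> nat \<Rightarrow> real" where
  "drift_term Q i = 2 * (arrival_mean * scaled Q i - (\<Sum>l<n. mu l * scaled Q l))"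

definition jump_bound :: real where
  "jump_bound = real Amax + real Smax"

definition B_V :: real where
  "B_V = jump_bound\<^sup>2 * (\<Sum>l<n. 1 / \<gamma> l)"

definition B_d :: real where
  "B_d = 2 * jump_bound * (arrival_mean * (\<Sum>l<n. 1 / \<gamma> l) + (\<Sum>l<n. mu l / \<gamma> l))"

definition K_slot :: real where
  "K_slot = B_V + real T * B_d + 1"

text \<open>The drift terms of all remaining slots of the frame are booked in advance.  Each remaining slot
  holds one credit \<open>K_slot\<close>, which pays for the second-order error \<open>B_V\<close> of \<open>V\<close>, for the change
  \<open>B_d\<close> of every booked drift term, and for the required decrease \<open>1\<close>.\<close>

definition lyapunov :: "state \<Rightarrow> real" where
  "lyapunov = (\<lambda>(Q, \<phi>, r). V Q + (\<Sum>j\<in>{r..<T}. drift_term Q (\<phi> ! j)) + real (T - r) * K_slot)"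

definition threshold :: nat where
  "threshold = nat \<lceil>real Smax + (\<Sum>l<n. \<gamma> l) * (B_V + (real T - 1) * K_slot + 1) / (2 * real T * margin)\<rceil>"

definition small_states :: "state set" where
  "small_states = {z \<in> Sp. \<forall>l<n. fst z l \<le> threshold}"

definition next_state :: "nat list \<Rightarrow> nat \<Rightarrow> (nat \<Rightarrow> nat) \<Rightarrow> state pmf" where
  "next_state \<phi> r Q' =
     (if Suc r < T then return_pmf (Q', \<phi>, Suc r)
      else bind_pmf (L (scaled Q')) (\<lambda>\<eta>. map_pmf (\<lambda>\<phi>'. (Q', \<phi>', 0)) (Y \<eta> mu)))"

lemma policy_kernel_eq:
  "Kp (Q, \<phi>, r) = bind_pmf A (\<lambda>a. bind_pmf S (\<lambda>s. next_state \<phi> r (queue_update n Q a (\<phi> ! r) s)))"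
  unfolding policy_kernel_def next_state_def map_pmf_def scaled_def[abs_def] Let_def by simp

lemma arrival_mean_nonneg: "arrival_mean \<ge> 0"
  unfolding arrival_mean_def by (rule Bochner_Integration.integral_nonneg) auto

lemma mu_nonneg: "l < n \<Longrightarrow> mu l \<ge> 0"
  using mu_pos by (auto intro: less_imp_le)

lemma mu_total_pos: "mu_total > 0"
proof -
  have "mu 0 \<le> mu_total"
    unfolding mu_total_def using n_pos by (intro member_le_sum) (auto intro: mu_nonneg)
  then show ?thesis
    using mu_pos n_pos by fastforce
qed

lemma margin_pos: "margin > 0"
proof -
  have "arrival_mean / mu_total < 1"
    using load mu_total_pos unfolding arrival_mean_def mu_total_def by simp
  then show ?thesis
    unfolding margin_def using mu_pos n_pos by auto
qed

lemma scaled_nonneg: "l < n \<Longrightarrow> scaled Q l \<ge> 0"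
  using gamma_pos by (auto simp: scaled_def less_imp_le)

lemma B_V_nonneg: "B_V \<ge> 0"
  unfolding B_V_def using gamma_pos by (auto intro!: mult_nonneg_nonneg sum_nonneg simp: less_imp_le)

lemma B_d_nonneg: "B_d \<ge> 0"
  unfolding B_d_def jump_bound_def using gamma_pos mu_nonneg arrival_mean_nonneg
  by (auto intro!: sum_nonneg add_nonneg_nonneg mult_nonneg_nonneg simp: less_imp_le)

lemma K_slot_ge_1: "K_slot \<ge> 1"
  unfolding K_slot_def using B_V_nonneg B_d_nonneg by simp

lemma finite_sorting: "finite (set_pmf (L q))"
proof (rule finite_subset)
  show "set_pmf (L q) \<subseteq> {\<eta>. \<eta> permutes {..<n}}"
    using L_valid unfolding valid_sorting_def by blast
qed (auto intro: finite_permutations)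

lemma finite_decision: "\<eta> permutes {..<n} \<Longrightarrow> finite (set_pmf (Y \<eta> mu))"
proof (rule finite_subset)
  assume "\<eta> permutes {..<n}"
  then show "set_pmf (Y \<eta> mu) \<subseteq> {\<phi>. set \<phi> \<subseteq> {..<n} \<and> length \<phi> = T}"
    using Y_valid unfolding valid_decision_def by auto
qed (auto intro: finite_lists_length_eq)

lemma set_pmf_kernel_subset:
  assumes z: "z \<in> Sp"
  shows "set_pmf (Kp z) \<subseteq> {w \<in> Sp. \<forall>l<n. fst w l \<le> (\<Sum>l<n. fst z l) + Amax}"
proof -
  obtain Q \<phi> r where zz: "z = (Q, \<phi>, r)"
    by (cases z) auto
  have z': "r < T" "length \<phi> = T" "\<forall>j\<in>set \<phi>. j < n"
    using z zz by (auto simp: state_space_def)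
  have "queue_update n Q a i s l \<le> (\<Sum>l<n. Q l) + Amax" if "a \<in> set_pmf A" "l < n" for a i s l
  proof -
    have "queue_update n Q a i s l \<le> Q l + a"
      using that by (auto simp: queue_update_def)
    moreover have "Q l \<le> (\<Sum>l<n. Q l)"
      using that by (intro member_le_sum) auto
    ultimately show ?thesis
      using A_bounded that by fastforce
  qed
  moreover have "\<forall>\<phi>'\<in>set_pmf (Y \<eta> mu). length \<phi>' = T \<and> (\<forall>j\<in>set \<phi>'. j < n)"
    if "\<eta> \<in> set_pmf (L q)" for \<eta> q
    using that L_valid Y_valid unfolding valid_sorting_def valid_decision_def by blast
  ultimately show ?thesis
    using z' T_pos
    by (auto simp: zz policy_kernel_def Let_def set_bind_pmf state_space_def queue_update_def
        split: if_splits)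
qed

lemma finite_kernel: "z \<in> Sp \<Longrightarrow> finite (set_pmf (Kp z))"
  by (rule finite_subset[OF set_pmf_kernel_subset finite_bounded_states])

lemma kernel_closed: "z \<in> Sp \<Longrightarrow> set_pmf (Kp z) \<subseteq> Sp"
  using set_pmf_kernel_subset by blast

lemma queue_update_jump:
  assumes "a \<le> Amax" and "\<forall>l<n. s l \<le> Smax" and "l < n"
  shows "\<bar>real (queue_update n Q a i s l) - real (Q l)\<bar> \<le> jump_bound"
  using assms unfolding queue_update_def jump_bound_def by (auto simp: of_nat_diff)

lemma scaled_queue_update_ge:
  assumes "\<forall>l<n. s l \<le> Smax" and "l < n"
  shows "scaled (queue_update n Q a i s) l \<ge> (real (Q l) - real Smax) / \<gamma> l"
proof -
  have "real (queue_update n Q a i s l) \<ge> real (Q l) - real Smax"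
    using assms unfolding queue_update_def by (auto simp: of_nat_diff)
  moreover have "\<gamma> l > 0"
    using gamma_pos assms(2) by simp
  ultimately show ?thesis
    unfolding scaled_def by (simp add: divide_right_mono)
qed

lemma V_queue_update_le:
  assumes a: "a \<le> Amax" and s: "\<forall>l<n. s l \<le> Smax" and i: "i < n"
  shows "V (queue_update n Q a i s)
    \<le> V Q + 2 * scaled Q i * real a - 2 * (\<Sum>l<n. scaled Q l * real (s l)) + B_V"
proof -
  define e where "e l = (if l = i then real a else 0)" for l
  have "(real (queue_update n Q a i s l))\<^sup>2 / \<gamma> l
      \<le> ((real (Q l))\<^sup>2 + 2 * real (Q l) * (e l - real (s l)) + jump_bound\<^sup>2) / \<gamma> l"
    if l: "l < n" for l
  proof -
    have "real (queue_update n Q a i s l) = max 0 (real (Q l) + (e l - real (s l)))"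
      using l by (auto simp: queue_update_def e_def of_nat_diff max_def)
    moreover have "\<bar>e l - real (s l)\<bar> \<le> jump_bound"
      using a s l by (auto simp: e_def jump_bound_def)
    ultimately show ?thesis
      using gamma_pos l by (intro divide_right_mono) (auto intro: pos_part_square_le less_imp_le)
  qed
  then have "V (queue_update n Q a i s)
      \<le> (\<Sum>l<n. ((real (Q l))\<^sup>2 + 2 * real (Q l) * (e l - real (s l)) + jump_bound\<^sup>2) / \<gamma> l)"
    unfolding V_def by (intro sum_mono) auto
  also have "\<dots> = V Q + 2 * (\<Sum>l<n. scaled Q l * e l) - 2 * (\<Sum>l<n. scaled Q l * real (s l)) + B_V"
    unfolding V_def B_V_def scaled_def
    by (simp add: add_divide_distrib diff_divide_distrib sum.distrib sum_subtractf
        sum_distrib_left algebra_simps)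
  also have "(\<Sum>l<n. scaled Q l * e l) = scaled Q i * real a"
    using i by (simp add: e_def if_distrib cong: if_cong)
  finally show ?thesis
    by (simp add: mult.assoc)
qed

lemma drift_term_queue_update_le:
  assumes a: "a \<le> Amax" and s: "\<forall>l<n. s l \<le> Smax" and j: "j < n"
  shows "drift_term (queue_update n Q a i s) j \<le> drift_term Q j + B_d"
proof -
  let ?Q' = "queue_update n Q a i s"
  have change: "\<bar>scaled ?Q' l - scaled Q l\<bar> \<le> jump_bound / \<gamma> l" if "l < n" for l
  proof -
    have "scaled ?Q' l - scaled Q l = (real (?Q' l) - real (Q l)) / \<gamma> l"
      unfolding scaled_def by (simp add: diff_divide_distrib)
    moreover have "\<gamma> l > 0"
      using gamma_pos that by simp
    ultimately show ?thesis
      using queue_update_jump[OF a s that] by (simp add: abs_div divide_right_mono)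
  qed
  have "jump_bound / \<gamma> j \<le> jump_bound * (\<Sum>l<n. 1 / \<gamma> l)"
  proof -
    have "1 / \<gamma> j \<le> (\<Sum>l<n. 1 / \<gamma> l)"
      using j gamma_pos by (intro member_le_sum) auto
    from mult_left_mono[OF this, of jump_bound] show ?thesis
      by (simp add: jump_bound_def)
  qed
  then have "scaled ?Q' j - scaled Q j \<le> jump_bound * (\<Sum>l<n. 1 / \<gamma> l)"
    using change[OF j] by (simp add: abs_le_iff)
  then have arrival_part:
    "arrival_mean * (scaled ?Q' j - scaled Q j) \<le> arrival_mean * (jump_bound * (\<Sum>l<n. 1 / \<gamma> l))"
    using arrival_mean_nonneg by (rule mult_left_mono)
  have "(\<Sum>l<n. mu l * (scaled Q l - scaled ?Q' l)) \<le> (\<Sum>l<n. mu l * (jump_bound / \<gamma> l))"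
    using change mu_nonneg by (intro sum_mono mult_left_mono) (auto simp: abs_le_iff)
  then have service_part:
    "(\<Sum>l<n. mu l * (scaled Q l - scaled ?Q' l)) \<le> jump_bound * (\<Sum>l<n. mu l / \<gamma> l)"
    by (simp add: sum_distrib_left ac_simps)
  have "drift_term ?Q' j - drift_term Q j
      = 2 * (arrival_mean * (scaled ?Q' j - scaled Q j)) + 2 * (\<Sum>l<n. mu l * (scaled Q l - scaled ?Q' l))"
    unfolding drift_term_def by (simp add: algebra_simps sum_subtractf)
  moreover have "B_d = 2 * (arrival_mean * (jump_bound * (\<Sum>l<n. 1 / \<gamma> l)))
      + 2 * (jump_bound * (\<Sum>l<n. mu l / \<gamma> l))"
    unfolding B_d_def by (simp add: algebra_simps)
  ultimately show ?thesis
    using arrival_part service_part by linarith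
qed

lemma integrable_service: "l < n \<Longrightarrow> integrable (measure_pmf S) (\<lambda>s. real (s l))"
  using S_bounded by (intro integrable_measure_pmf_bounded[where B = "real Smax"]) auto

lemma integrable_arrivals: "integrable (measure_pmf A) real"
  using A_bounded by (intro integrable_measure_pmf_bounded[where B = "real Amax"]) auto

lemma integrable_service_sum:
  "integrable (measure_pmf S) (\<lambda>s. \<Sum>l<n. w l * real (s l))"
  by (auto intro!: integrable_service)

lemma expectation_service:
  "measure_pmf.expectation S (\<lambda>s. \<Sum>l<n. w l * real (s l)) = (\<Sum>l<n. w l * mu l)"
  by (subst Bochner_Integration.integral_sum) (auto intro!: integrable_service simp: service_rate_def)

lemma expectation_arrival_service_le:
  fixes h :: "nat \<Rightarrow> (nat \<Rightarrow> nat) \<Rightarrow> real"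
  assumes h_le: "\<And>a s. a \<in> set_pmf A \<Longrightarrow> s \<in> set_pmf S \<Longrightarrow>
        h a s \<le> c + 2 * scaled Q i * real a - 2 * (\<Sum>l<n. scaled Q l * real (s l))"
    and h_bounded: "\<And>a s. a \<in> set_pmf A \<Longrightarrow> s \<in> set_pmf S \<Longrightarrow> \<bar>h a s\<bar> \<le> B"
  shows "measure_pmf.expectation A (\<lambda>a. measure_pmf.expectation S (h a)) \<le> c + drift_term Q i"
proof -
  define g where "g a = c + 2 * scaled Q i * real a - 2 * (\<Sum>l<n. scaled Q l * mu l)" for a
  have "measure_pmf.expectation S (h a) \<le> g a" if a: "a \<in> set_pmf A" for a
  proof -
    have "integrable (measure_pmf S) (h a)"
      using h_bounded a by (intro integrable_measure_pmf_bounded[where B = B])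
    then have "measure_pmf.expectation S (h a)
        \<le> measure_pmf.expectation S (\<lambda>s. c + 2 * scaled Q i * real a - 2 * (\<Sum>l<n. scaled Q l * real (s l)))"
      using h_le a
      by (intro integral_mono_AE AE_pmfI Bochner_Integration.integrable_diff
          integrable_mult_right integrable_service_sum) auto
    also have "\<dots> = g a"
      using expectation_service[of "scaled Q"]
      by (simp add: g_def integrable_service_sum)
    finally show ?thesis .
  qed
  moreover have "integrable (measure_pmf A) (\<lambda>a. measure_pmf.expectation S (h a))"
    using h_bounded by (intro integrable_measure_pmf_bounded[where B = B] abs_expectation_le)
  ultimately have "measure_pmf.expectation A (\<lambda>a. measure_pmf.expectation S (h a))
      \<le> measure_pmf.expectation A g"
    unfolding g_def
    by (intro integral_mono_AE AE_pmfI Bochner_Integration.integrable_diff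
        Bochner_Integration.integrable_add integrable_mult_right integrable_arrivals) auto
  also have "\<dots> = c + drift_term Q i"
    using integrable_arrivals
    by (simp add: g_def[abs_def] drift_term_def arrival_mean_def algebra_simps)
  finally show ?thesis .
qed

lemma expectation_kernel_le:
  assumes z: "(Q, \<phi>, r) \<in> Sp"
    and next_le: "\<And>a s. a \<in> set_pmf A \<Longrightarrow> s \<in> set_pmf S \<Longrightarrow>
       measure_pmf.expectation (next_state \<phi> r (queue_update n Q a (\<phi> ! r) s)) lyapunov
         \<le> V (queue_update n Q a (\<phi> ! r) s) + c"
  shows "measure_pmf.expectation (Kp (Q, \<phi>, r)) lyapunov \<le> V Q + drift_term Q (\<phi> ! r) + B_V + c"
proof -
  define i where "i = \<phi> ! r"
  have i: "i < n"
    using z by (auto simp: state_space_def i_def)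
  define N where "N a s = next_state \<phi> r (queue_update n Q a i s)" for a s
  define h where "h a s = measure_pmf.expectation (N a s) lyapunov" for a s
  have K_eq: "Kp (Q, \<phi>, r) = bind_pmf A (\<lambda>a. bind_pmf S (N a))"
    unfolding N_def i_def by (rule policy_kernel_eq)
  have fin: "finite (set_pmf (Kp (Q, \<phi>, r)))"
    using finite_kernel[OF z] .
  have N_sub: "set_pmf (bind_pmf S (N a)) \<subseteq> set_pmf (Kp (Q, \<phi>, r))" if "a \<in> set_pmf A" for a
    using that unfolding K_eq by auto
  have "measure_pmf.expectation (Kp (Q, \<phi>, r)) lyapunov
      = measure_pmf.expectation A (\<lambda>a. measure_pmf.expectation (bind_pmf S (N a)) lyapunov)"
    using fin unfolding K_eq by (rule expectation_bind_pmf_finite)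
  also have "\<dots> = measure_pmf.expectation A (\<lambda>a. measure_pmf.expectation S (h a))"
    unfolding h_def using N_sub fin
    by (intro integral_cong_AE AE_pmfI expectation_bind_pmf_finite) (auto intro: finite_subset)
  also have "\<dots> \<le> (V Q + B_V + c) + drift_term Q i"
  proof (rule expectation_arrival_service_le)
    fix a s assume as: "a \<in> set_pmf A" "s \<in> set_pmf S"
    show "h a s \<le> V Q + B_V + c + 2 * scaled Q i * real a - 2 * (\<Sum>l<n. scaled Q l * real (s l))"
      using next_le[OF as] V_queue_update_le[of a s i Q] A_bounded S_bounded as i
      unfolding h_def N_def i_def by fastforce
    have "set_pmf (N a s) \<subseteq> set_pmf (Kp (Q, \<phi>, r))"
      using as unfolding K_eq by auto
    then show "\<bar>h a s\<bar> \<le> (\<Sum>w\<in>set_pmf (Kp (Q, \<phi>, r)). \<bar>lyapunov w\<bar>)"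
      unfolding h_def using fin by (intro abs_expectation_le member_le_sum) auto
  qed
  finally show ?thesis
    by (simp add: i_def)
qed

lemma expected_count:
  "measure_pmf.expectation (Y \<eta> mu) (\<lambda>\<phi>. real (count_list \<phi> (\<eta> i))) = real T * dispatch_frac T Y mu i \<eta>"
proof -
  have "(\<lambda>j. j = \<eta> i) = (=) (\<eta> i)"
    by auto
  then show ?thesis
    using T_pos by (simp add: dispatch_frac_def count_list_eq_length_filter)
qed

lemma frame_drift_sum_eq:
  assumes \<eta>: "\<eta> permutes {..<n}" and "length \<phi> = T" and "set \<phi> \<subseteq> {..<n}"
  shows "(\<Sum>j<T. drift_term Q (\<phi> ! j))
    = 2 * arrival_mean * (\<Sum>i<n. real (count_list \<phi> (\<eta> i)) * scaled Q (\<eta> i))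
      - 2 * real T * (\<Sum>i<n. mu (\<eta> i) * scaled Q (\<eta> i))"
proof -
  have reindex: "(\<Sum>v<n. g v) = (\<Sum>i<n. g (\<eta> i))" for g :: "nat \<Rightarrow> real"
    using sum.reindex_bij_betw[OF permutes_imp_bij[OF \<eta>], of g] by simp
  have "(\<Sum>j<T. scaled Q (\<phi> ! j)) = (\<Sum>v<n. real (count_list \<phi> v) * scaled Q v)"
    using assms sum_list_map_eq_sum_count_list[of "{..<n}" \<phi> "scaled Q"]
    by (simp add: sum_list_sum_nth atLeast0LessThan)
  also have "\<dots> = (\<Sum>i<n. real (count_list \<phi> (\<eta> i)) * scaled Q (\<eta> i))"
    by (rule reindex)
  finally have counted: "(\<Sum>j<T. scaled Q (\<phi> ! j))
      = (\<Sum>i<n. real (count_list \<phi> (\<eta> i)) * scaled Q (\<eta> i))" .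
  have "(\<Sum>j<T. drift_term Q (\<phi> ! j))
      = 2 * arrival_mean * (\<Sum>j<T. scaled Q (\<phi> ! j)) - 2 * real T * (\<Sum>l<n. mu l * scaled Q l)"
    unfolding drift_term_def by (simp add: sum_subtractf sum_distrib_left algebra_simps)
  then show ?thesis
    by (simp only: counted reindex[of "\<lambda>l. mu l * scaled Q l"])
qed

lemma expected_frame_drift:
  assumes \<eta>: "\<eta> permutes {..<n}"
  shows "measure_pmf.expectation (Y \<eta> mu) (\<lambda>\<phi>. \<Sum>j<T. drift_term Q (\<phi> ! j))
    = 2 * real T * (\<Sum>i<n. scaled Q (\<eta> i) * (arrival_mean * dispatch_frac T Y mu i \<eta> - mu (\<eta> i)))"
proof -
  have "measure_pmf.expectation (Y \<eta> mu) (\<lambda>\<phi>. \<Sum>j<T. drift_term Q (\<phi> ! j))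
      = measure_pmf.expectation (Y \<eta> mu) (\<lambda>\<phi>.
          2 * arrival_mean * (\<Sum>i<n. real (count_list \<phi> (\<eta> i)) * scaled Q (\<eta> i))
          - 2 * real T * (\<Sum>i<n. mu (\<eta> i) * scaled Q (\<eta> i)))"
    using Y_valid \<eta> unfolding valid_decision_def
    by (intro integral_cong_AE AE_pmfI frame_drift_sum_eq[OF \<eta>]) auto
  also have "\<dots> = 2 * arrival_mean * (\<Sum>i<n. real T * dispatch_frac T Y mu i \<eta> * scaled Q (\<eta> i))
      - 2 * real T * (\<Sum>i<n. mu (\<eta> i) * scaled Q (\<eta> i))"
    using finite_decision[OF \<eta>] by (simp add: integrable_measure_pmf_finite expected_count)
  finally show ?thesis
    by (simp add: sum_distrib_left sum_subtractf algebra_simps)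
qed

lemma partial_sum_le_margin:
  assumes \<eta>: "\<eta> permutes {..<n}" and m: "1 \<le> m" "m \<le> n"
  shows "(\<Sum>i<m. arrival_mean * dispatch_frac T Y mu i \<eta> - mu (\<eta> i)) \<le> - margin"
proof -
  define P where "P = (\<Sum>i<m. mu (\<eta> i))"
  have "(\<Sum>i<m. dispatch_frac T Y mu i \<eta>) \<le> P / mu_total"
    using cond \<eta> m unfolding P_def mu_total_def by auto
  then have "arrival_mean * (\<Sum>i<m. dispatch_frac T Y mu i \<eta>) \<le> arrival_mean / mu_total * P"
    using mult_left_mono[OF _ arrival_mean_nonneg] by fastforce
  moreover have "mu 0 \<le> P"
  proof -
    have "\<eta> i < n" if "i < n" for i
      using permutes_in_image[OF \<eta>] that by simp
    then have "mu 0 \<le> mu (\<eta> 0)" and "mu (\<eta> 0) \<le> P"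
      using mu_sorted mu_nonneg m n_pos unfolding P_def
      by (auto intro!: member_le_sum[where f = "\<lambda>i. mu (\<eta> i)"])
    then show ?thesis
      by linarith
  qed
  moreover have "arrival_mean / mu_total < 1"
    using load mu_total_pos unfolding arrival_mean_def mu_total_def by simp
  ultimately have "arrival_mean * (\<Sum>i<m. dispatch_frac T Y mu i \<eta>) - P \<le> - margin"
    unfolding margin_def using mult_left_mono[of "mu 0" P "1 - arrival_mean / mu_total"]
    by (simp add: algebra_simps)
  then show ?thesis
    unfolding P_def by (simp add: sum_subtractf sum_distrib_left)
qed

lemma frame_drift_le:
  assumes \<eta>: "\<eta> permutes {..<n}"
    and sorted: "\<forall>i j. i \<le> j \<and> j < n \<longrightarrow> scaled Q (\<eta> j) \<le> scaled Q (\<eta> i)"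
  shows "measure_pmf.expectation (Y \<eta> mu) (\<lambda>\<phi>. \<Sum>j<T. drift_term Q (\<phi> ! j))
    \<le> - 2 * real T * margin * scaled Q (\<eta> 0)"
proof -
  have "(\<Sum>i<n. scaled Q (\<eta> i) * (arrival_mean * dispatch_frac T Y mu i \<eta> - mu (\<eta> i)))
      \<le> - margin * scaled Q (\<eta> 0)"
  proof (rule sum_mult_nonincreasing_le[OF n_pos])
    show "scaled Q (\<eta> i) \<ge> 0" if "i < n" for i
      using permutes_in_image[OF \<eta>] that by (simp add: scaled_nonneg)
  qed (use sorted partial_sum_le_margin[OF \<eta>] in auto)
  from mult_left_mono[OF this, of "2 * real T"] show ?thesis
    unfolding expected_frame_drift[OF \<eta>] by simp
qed

lemma expectation_new_frame_le:
  assumes r: "\<not> Suc r < T" and l: "l < n"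
  shows "measure_pmf.expectation (next_state \<phi> r Q') lyapunov
    \<le> V Q' + real T * K_slot - 2 * real T * margin * scaled Q' l"
proof -
  have sorting: "\<eta> permutes {..<n}" "\<forall>i j. i \<le> j \<and> j < n \<longrightarrow> scaled Q' (\<eta> j) \<le> scaled Q' (\<eta> i)"
    if "\<eta> \<in> set_pmf (L (scaled Q'))" for \<eta>
    using L_valid that unfolding valid_sorting_def by blast+
  have "finite (set_pmf (next_state \<phi> r Q'))"
    using r finite_sorting finite_decision sorting by (auto simp: next_state_def)
  then have "measure_pmf.expectation (next_state \<phi> r Q') lyapunov
      = measure_pmf.expectation (L (scaled Q'))
          (\<lambda>\<eta>. measure_pmf.expectation (Y \<eta> mu) (\<lambda>\<phi>'. lyapunov (Q', \<phi>', 0)))"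
    using r by (simp add: next_state_def expectation_bind_pmf_finite)
  also have "\<dots> \<le> V Q' + real T * K_slot - 2 * real T * margin * scaled Q' l"
  proof (rule expectation_le_const_finite[OF finite_sorting])
    fix \<eta> assume "\<eta> \<in> set_pmf (L (scaled Q'))"
    note \<eta> = sorting[OF this]
    have "measure_pmf.expectation (Y \<eta> mu) (\<lambda>\<phi>'. lyapunov (Q', \<phi>', 0))
        = V Q' + real T * K_slot + measure_pmf.expectation (Y \<eta> mu) (\<lambda>\<phi>'. \<Sum>j<T. drift_term Q' (\<phi>' ! j))"
      using finite_decision[OF \<eta>(1)]
      by (simp add: lyapunov_def integrable_measure_pmf_finite atLeast0LessThan)
    also have "\<dots> \<le> V Q' + real T * K_slot - 2 * real T * margin * scaled Q' (\<eta> 0)"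
      using frame_drift_le[OF \<eta>] by simp
    also have "\<dots> \<le> V Q' + real T * K_slot - 2 * real T * margin * scaled Q' l"
    proof -
      obtain k where "k < n" "l = \<eta> k"
        using permutes_image[OF \<eta>(1)] l by (metis imageE lessThan_iff)
      then have "scaled Q' l \<le> scaled Q' (\<eta> 0)"
        using \<eta>(2) by auto
      then show ?thesis
        using margin_pos T_pos by (simp add: mult_left_mono)
    qed
    finally show "measure_pmf.expectation (Y \<eta> mu) (\<lambda>\<phi>'. lyapunov (Q', \<phi>', 0))
        \<le> V Q' + real T * K_slot - 2 * real T * margin * scaled Q' l" .
  qed
  finally show ?thesis .
qed

lemma large_queue_margin:
  assumes l: "l < n" and large: "threshold < Q l"
  shows "B_V + (real T - 1) * K_slot + 1 \<le> 2 * real T * margin * ((real (Q l) - real Smax) / \<gamma> l)"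
proof -
  define R where "R = (B_V + (real T - 1) * K_slot + 1) / (2 * real T * margin)"
  have "R \<ge> 0"
    unfolding R_def using B_V_nonneg K_slot_ge_1 T_pos margin_pos by (intro divide_nonneg_pos) auto
  moreover have "\<gamma> l \<le> (\<Sum>l<n. \<gamma> l)"
    using l gamma_pos by (intro member_le_sum) (auto simp: less_imp_le)
  ultimately have "\<gamma> l * R \<le> (\<Sum>l<n. \<gamma> l) * R"
    by (simp add: mult_right_mono)
  moreover have "real Smax + (\<Sum>l<n. \<gamma> l) * R \<le> real threshold"
    unfolding threshold_def R_def times_divide_eq_right by (rule real_nat_ceiling_ge)
  ultimately have "R \<le> (real (Q l) - real Smax) / \<gamma> l"
    using large gamma_pos l by (simp add: field_simps)
  then have "2 * real T * margin * R \<le> 2 * real T * margin * ((real (Q l) - real Smax) / \<gamma> l)"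
    using margin_pos by (intro mult_left_mono) auto
  then show ?thesis
    unfolding R_def using margin_pos T_pos by simp
qed

lemma drift_within_frame:
  assumes z: "(Q, \<phi>, r) \<in> Sp" and r: "Suc r < T"
  shows "measure_pmf.expectation (Kp (Q, \<phi>, r)) lyapunov \<le> lyapunov (Q, \<phi>, r) - 1"
proof -
  define c where "c = (\<Sum>j\<in>{Suc r..<T}. drift_term Q (\<phi> ! j)) + real (T - Suc r) * (B_d + K_slot)"
  have \<phi>: "length \<phi> = T" "\<forall>j\<in>set \<phi>. j < n"
    using z by (auto simp: state_space_def)
  have "measure_pmf.expectation (Kp (Q, \<phi>, r)) lyapunov \<le> V Q + drift_term Q (\<phi> ! r) + B_V + c"
  proof (rule expectation_kernel_le[OF z])
    fix a s assume "a \<in> set_pmf A" "s \<in> set_pmf S"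
    then have a: "a \<le> Amax" and s: "\<forall>l<n. s l \<le> Smax"
      using A_bounded S_bounded by auto
    let ?Q' = "queue_update n Q a (\<phi> ! r) s"
    have "(\<Sum>j\<in>{Suc r..<T}. drift_term ?Q' (\<phi> ! j)) \<le> (\<Sum>j\<in>{Suc r..<T}. drift_term Q (\<phi> ! j) + B_d)"
      using \<phi> by (intro sum_mono drift_term_queue_update_le[OF a s]) auto
    then show "measure_pmf.expectation (next_state \<phi> r ?Q') lyapunov \<le> V ?Q' + c"
      using r by (simp add: next_state_def lyapunov_def c_def sum.distrib algebra_simps)
  qed
  also have "\<dots> \<le> lyapunov (Q, \<phi>, r) - 1"
  proof -
    have "lyapunov (Q, \<phi>, r) = V Q + drift_term Q (\<phi> ! r) + (\<Sum>j\<in>{Suc r..<T}. drift_term Q (\<phi> ! j))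
        + (real (T - Suc r) + 1) * K_slot"
      using r by (simp add: lyapunov_def sum.atLeast_Suc_lessThan Suc_diff_Suc)
    moreover have "real (T - Suc r) * B_d \<le> real T * B_d"
      using B_d_nonneg by (intro mult_right_mono) auto
    ultimately show ?thesis
      unfolding c_def K_slot_def by (simp add: algebra_simps)
  qed
  finally show ?thesis .
qed

lemma drift_at_frame_end:
  assumes z: "(Q, \<phi>, r) \<in> Sp" and r: "\<not> Suc r < T" and l: "l < n" "threshold < Q l"
  shows "measure_pmf.expectation (Kp (Q, \<phi>, r)) lyapunov \<le> lyapunov (Q, \<phi>, r) - 1"
proof -
  define c where "c = real T * K_slot - 2 * real T * margin * ((real (Q l) - real Smax) / \<gamma> l)"
  have "measure_pmf.expectation (Kp (Q, \<phi>, r)) lyapunov \<le> V Q + drift_term Q (\<phi> ! r) + B_V + c"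
  proof (rule expectation_kernel_le[OF z])
    fix a s assume "s \<in> set_pmf S"
    then have s: "\<forall>l<n. s l \<le> Smax"
      using S_bounded by auto
    let ?Q' = "queue_update n Q a (\<phi> ! r) s"
    have "2 * real T * margin * ((real (Q l) - real Smax) / \<gamma> l) \<le> 2 * real T * margin * scaled ?Q' l"
      using scaled_queue_update_ge[OF s l(1)] margin_pos by (intro mult_left_mono) auto
    then show "measure_pmf.expectation (next_state \<phi> r ?Q') lyapunov \<le> V ?Q' + c"
      using expectation_new_frame_le[OF r l(1), of \<phi> ?Q'] unfolding c_def by linarith
  qed
  also have "\<dots> \<le> lyapunov (Q, \<phi>, r) - 1"
  proof -
    have "{r..<T} = {r}" and "T - r = 1"
      using z r by (auto simp: state_space_def)
    then have "lyapunov (Q, \<phi>, r) = V Q + drift_term Q (\<phi> ! r) + K_slot"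
      by (simp add: lyapunov_def)
    then show ?thesis
      using large_queue_margin[where Q = Q, OF l] unfolding c_def by (simp add: algebra_simps)
  qed
  finally show ?thesis .
qed

lemma drift_off_small_states:
  assumes "z \<in> Sp" and "z \<notin> small_states"
  shows "measure_pmf.expectation (Kp z) lyapunov \<le> lyapunov z - 1"
proof -
  obtain Q \<phi> r where z: "z = (Q, \<phi>, r)"
    by (cases z) auto
  show ?thesis
  proof (cases "Suc r < T")
    case True
    then show ?thesis
      using assms drift_within_frame z by simp
  next
    case False
    obtain l where "l < n" "threshold < Q l"
      using assms z unfolding small_states_def by auto
    then show ?thesis
      using assms drift_at_frame_end[OF _ False] z by simp
  qed
qed

lemma lyapunov_lower_bound:
  assumes z: "(Q, \<phi>, r) \<in> Sp"
  shows "lyapunov (Q, \<phi>, r) \<ge> - (\<Sum>l<n. (real T * mu l)\<^sup>2 / \<gamma> l)"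
proof -
  define M where "M = (\<Sum>l<n. mu l * scaled Q l)"
  have M_nonneg: "M \<ge> 0"
    unfolding M_def using scaled_nonneg mu_nonneg by (auto intro!: sum_nonneg)
  have "drift_term Q (\<phi> ! j) \<ge> - 2 * M" if "j \<in> {r..<T}" for j
  proof -
    have "\<phi> ! j < n"
      using z that by (auto simp: state_space_def)
    then show ?thesis
      unfolding drift_term_def M_def using arrival_mean_nonneg scaled_nonneg by simp
  qed
  then have "(\<Sum>j\<in>{r..<T}. - 2 * M) \<le> (\<Sum>j\<in>{r..<T}. drift_term Q (\<phi> ! j))"
    by (rule sum_mono)
  then have "(\<Sum>j\<in>{r..<T}. drift_term Q (\<phi> ! j)) \<ge> - 2 * real (T - r) * M"
    by simp
  moreover have "- 2 * real (T - r) * M \<ge> - 2 * real T * M"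
    using M_nonneg by (simp add: mult_right_mono)
  moreover have "V Q - 2 * real T * M = (\<Sum>l<n. ((real (Q l) - real T * mu l)\<^sup>2 - (real T * mu l)\<^sup>2) / \<gamma> l)"
    unfolding V_def M_def scaled_def
    by (simp add: power2_diff sum_subtractf sum_distrib_left diff_divide_distrib algebra_simps)
  moreover have "\<dots> \<ge> (\<Sum>l<n. - (real T * mu l)\<^sup>2 / \<gamma> l)"
    using gamma_pos by (intro sum_mono divide_right_mono) (auto simp: less_imp_le)
  moreover have "real (T - r) * K_slot \<ge> 0"
    using K_slot_ge_1 by simp
  ultimately show ?thesis
    unfolding lyapunov_def by (simp add: sum_negf)
qed

theorem policy_positive_recurrent: "positive_recurrent Kp Sp"
proof (rule positive_recurrent_if_drift[OF finite_kernel kernel_closed _ drift_off_small_states])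
  show "lyapunov z \<ge> - (\<Sum>l<n. (real T * mu l)\<^sup>2 / \<gamma> l)" if "z \<in> Sp" for z
    using that lyapunov_lower_bound by (cases z) auto
  show "finite small_states"
    unfolding small_states_def by (rule finite_bounded_states)
  show "small_states \<subseteq> Sp"
    unfolding small_states_def by auto
qed

end

theorem corollary1:
  fixes n T :: nat and A :: "nat pmf" and S :: "(nat \<Rightarrow> nat) pmf"
    and \<gamma> :: "nat \<Rightarrow> real"
    and L :: "(nat \<Rightarrow> real) \<Rightarrow> (nat \<Rightarrow> nat) pmf"
    and Y :: "(nat \<Rightarrow> nat) \<Rightarrow> (nat \<Rightarrow> real) \<Rightarrow> nat list pmf"
  assumes n_pos: "n \<ge> 1"
    and A_bounded: "\<exists>Amax::nat. \<forall>a\<in>set_pmf A. a \<le> n * Amax"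
    and S_bounded: "\<exists>Smax::nat. \<forall>s\<in>set_pmf S. \<forall>l<n. s l \<le> Smax"
    and mu_pos: "\<forall>l<n. service_rate S l > 0"
    and mu_sorted: "\<forall>l m. l \<le> m \<and> m < n \<longrightarrow> service_rate S l \<le> service_rate S m"
    and T_pos: "T \<ge> 1"
    and gamma_pos: "\<forall>l<n. \<gamma> l > 0"
    and L_valid: "valid_sorting n L"
    and Y_valid: "valid_decision n T Y (service_rate S)"
    and cond: "\<forall>\<eta>. \<eta> permutes {..<n} \<longrightarrow> (\<forall>m\<in>{1..n}.
                 (\<Sum>l<m. dispatch_frac T Y (service_rate S) l \<eta>)
                   \<le> (\<Sum>l<m. service_rate S (\<eta> l)) / (\<Sum>l<n. service_rate S l))"
    and load: "measure_pmf.expectation A real < (\<Sum>l<n. service_rate S l)"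
  shows "positive_recurrent (policy_kernel n A S T \<gamma> L Y) (state_space n T)"
proof -
  obtain Amax :: nat where "\<forall>a\<in>set_pmf A. a \<le> n * Amax"
    using A_bounded by blast
  moreover obtain Smax :: nat where "\<forall>s\<in>set_pmf S. \<forall>l<n. s l \<le> Smax"
    using S_bounded by blast
  ultimately interpret dispatching_system n T A S \<gamma> L Y "n * Amax" Smax
    using n_pos mu_pos mu_sorted T_pos gamma_pos L_valid Y_valid cond load
    by unfold_locales auto
  show ?thesis
    by (rule policy_positive_recurrent)
qed

end
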